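(* Let $X\in\mathrm{St}(n,k)$ be fixed, $\widehat\beta\colon I\to\mathrm{St}(n,k)$ a curve and $\widehat Z$ a normal vector field along $\widehat\beta$ (i.e. $\widehat Z(t)\in N_{\widehat\beta(t)}\mathrm{St}(n,k)$). Let $q=(R,\theta)\colon I\to O(n)\times O(k)$ be a horizontal lift of $\widehat\beta$. Then $\widehat Z$ is normal parallel along $\widehat\beta$ if and only if $z^\perp(t)=R(t)^\top\widehat Z(t)\theta(t)\in N_X\mathrm{St}(n,k)$ satisfies $$\dot z^\perp(t)=-\big(P_X^\perp\circ f_{(\xi_1(t),\xi_2(t))}\big)(z^\perp(t)),\quad t\in I,$$ where $(\xi_1(t),\xi_2(t))=(R(t)^\top\dot R(t),\theta(t)^\top\dot\theta(t))$.
   Context: $\mathrm{St}(n,k)=\{Y\in\mathbb{R}^{n\times k}:Y^\top Y=I_k\}$ with metric $2\operatorname{tr}(V^\top W)$; $T_Y\mathrm{St}(n,k)=\{V:Y^\top V+V^\top Y=0\}$, $N_Y\mathrm{St}(n,k)$ its Frobenius-orthogonal complement, $P_Y^\perp(V)=\tfrac12Y(Y^\top V+V^\top Y)$ the orthogonal projection onto $N_Y\mathrm{St}(n,k)$. A normal field $\widehat Z$ along $\widehat\beta$ is normal parallel if $P^\perp_{\widehat\beta(t)}\big(\tfrac{d}{dt}\widehat Z(t)\big)=0$ for all $t$. $f_{(\xi_1,\xi_2)}(V)=\xi_1V-V\xi_2$. Horizontal lift: $R(t)X\theta(t)^\top=\widehat\beta(t)$ and $(R^\top\dot R,\theta^\top\dot\theta)\in\mathfrak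 p$, where $\mathfrak p$ is the orthogonal complement in $\mathfrak{so}(n)\times\mathfrak{so}(k)$ of $\mathfrak h=\{(\Omega,\eta):\Omega X=X\eta\}$ with respect to $\langle(\Omega_1,\Psi_1),(\Omega_2,\Psi_2)\rangle=-\operatorname{tr}(\Omega_1\Omega_2)+2\operatorname{tr}(\Psi_1\Psi_2)$. *)

theory Defs
  imports "HOL-Analysis.Analysis"
begin

text \<open>Matrices are type-indexed: an n x k real matrix is real^'k^'n.\<close>

definition stiefel :: "(real^'k^'n) set" where
  "stiefel = {Y. transpose Y ** Y = mat 1}"

definition frob_inner :: "real^'k^'n \<Rightarrow> real^'k^'n \<Rightarrow> real" where
  "frob_inner V W = trace (transpose V ** W)"

definition tangent_space :: "real^'k^'n \<Rightarrow> (real^'k^'n) set" where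
  "tangent_space Y = {V. transpose Y ** V + transpose V ** Y = 0}"

definition normal_space :: "real^'k^'n \<Rightarrow> (real^'k^'n) set" where
  "normal_space Y = {V. \<forall>W \<in> tangent_space Y. frob_inner W V = 0}"

definition P_perp :: "real^'k^'n \<Rightarrow> real^'k^'n \<Rightarrow> real^'k^'n" where
  "P_perp Y V = (1/2) *\<^sub>R (Y ** (transpose Y ** V + transpose V ** Y))"

definition normal_field :: "real set \<Rightarrow> (real \<Rightarrow> real^'k^'n) \<Rightarrow> (real \<Rightarrow> real^'k^'n) \<Rightarrow> bool" where
  "normal_field I \<beta> Z \<longleftrightarrow> (\<forall>t\<in>I. Z t \<in> normal_space (\<beta> t))"

definition normal_parallel :: "real set \<Rightarrow> (real \<Rightarrow> real^'k^'n) \<Rightarrow> (real \<Rightarrow> real^'k^'n) \<Rightarrow> bool" where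
  "normal_parallel I \<beta> Z \<longleftrightarrow> (\<forall>t\<in>I. P_perp (\<beta> t) (vector_derivative Z (at t)) = 0)"

definition f_xi :: "real^'n^'n \<Rightarrow> real^'k^'k \<Rightarrow> real^'k^'n \<Rightarrow> real^'k^'n" where
  "f_xi \<xi>1 \<xi>2 V = \<xi>1 ** V - V ** \<xi>2"

definition skew :: "(real^'m^'m) set" where
  "skew = {A. transpose A = - A}"

definition h_alg :: "real^'k^'n \<Rightarrow> ((real^'n^'n) \<times> (real^'k^'k)) set" where
  "h_alg X = {(\<Omega>, \<eta>). \<Omega> \<in> skew \<and> \<eta> \<in> skew \<and> \<Omega> ** X = X ** \<eta>}"

definition pair_inner :: "(real^'n^'n) \<times> (real^'k^'k) \<Rightarrow> (real^'n^'n) \<times> (real^'k^'k) \<Rightarrow> real" where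
  "pair_inner a b = - trace (fst a ** fst b) + 2 * trace (snd a ** snd b)"

definition p_alg :: "real^'k^'n \<Rightarrow> ((real^'n^'n) \<times> (real^'k^'k)) set" where
  "p_alg X = {a. fst a \<in> skew \<and> snd a \<in> skew \<and> (\<forall>b \<in> h_alg X. pair_inner a b = 0)}"

definition horizontal_lift ::
  "real set \<Rightarrow> real^'k^'n \<Rightarrow> (real \<Rightarrow> real^'k^'n) \<Rightarrow> (real \<Rightarrow> real^'n^'n) \<Rightarrow> (real \<Rightarrow> real^'k^'k) \<Rightarrow> bool" where
  "horizontal_lift I X \<beta> R \<theta> \<longleftrightarrow>
     (\<forall>t\<in>I. orthogonal_matrix (R t) \<and> orthogonal_matrix (\<theta> t)
        \<and> R t ** X ** transpose (\<theta> t) = \<beta> t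
        \<and> R differentiable (at t) \<and> \<theta> differentiable (at t)
        \<and> (transpose (R t) ** vector_derivative R (at t),
           transpose (\<theta> t) ** vector_derivative \<theta> (at t)) \<in> p_alg X)"

end

theory Submission imports Defs begin

text \<open>Conjugating by the lift moves everything to the fixed point X: the curve
  z = R^T Z \<theta> stays in the normal space at X, so P_X fixes z and hence also its
  derivative. Since the lift has skew logarithmic derivatives xi1 = R^T R', xi2 = \<theta>^T \<theta>',
  the product rule gives z' = R^T Z' \<theta> - f_xi(z), and the projections are equivariant,
  P_X (R^T V \<theta>) = R^T P_\<beta>(V) \<theta>. Applying P_X to the product rule therefore yields
  z' + P_X f_xi(z) = R^T P_\<beta>(Z') \<theta>, which vanishes exactly when Z is normal parallel.\<close>

lemma matrix_add_rdistrib: "((A::real^'m^'n) + B) ** C = A ** C + B ** C"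
  by (simp add: matrix_matrix_mult_def vec_eq_iff sum.distrib algebra_simps)

lemma matrix_diff_ldistrib: "(A::real^'m^'n) ** (B - C) = A ** B - A ** C"
  by (simp add: matrix_matrix_mult_def vec_eq_iff sum_subtractf algebra_simps)

lemma matrix_diff_rdistrib: "((A::real^'m^'n) - B) ** C = A ** C - B ** C"
  by (simp add: matrix_matrix_mult_def vec_eq_iff sum_subtractf algebra_simps)

lemma matrix_uminus_left: "(- (A::real^'m^'n)) ** B = - (A ** B)"
  by (simp add: matrix_matrix_mult_def vec_eq_iff sum_negf)

lemma matrix_uminus_right: "(A::real^'m^'n) ** (- B) = - (A ** B)"
  by (simp add: matrix_matrix_mult_def vec_eq_iff sum_negf)

lemma transpose_add: "transpose ((A::real^'m^'n) + B) = transpose A + transpose B"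
  by (simp add: transpose_def vec_eq_iff)

lemma transpose_diff: "transpose ((A::real^'m^'n) - B) = transpose A - transpose B"
  by (simp add: transpose_def vec_eq_iff)

lemma transpose_uminus: "transpose (- (A::real^'m^'n)) = - transpose A"
  by (simp add: transpose_def vec_eq_iff)

lemmas matrix_arith_simps = matrix_add_ldistrib matrix_add_rdistrib
  matrix_diff_ldistrib matrix_diff_rdistrib matrix_uminus_left matrix_uminus_right
  matrix_scalar_ac scalar_matrix_assoc[symmetric]
  transpose_add transpose_diff transpose_uminus transpose_scalar matrix_transpose_mul

lemma bounded_bilinear_matrix_mult:
  "bounded_bilinear ((**) :: real^'m^'n \<Rightarrow> real^'p^'m \<Rightarrow> real^'p^'n)"
proof -
  have "bilinear ((**) :: real^'m^'n \<Rightarrow> real^'p^'m \<Rightarrow> real^'p^'n)"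
    unfolding bilinear_def by (auto intro!: linearI simp: matrix_arith_simps)
  then show ?thesis
    by (simp add: bilinear_conv_bounded_bilinear)
qed

lemma bounded_linear_transpose: "bounded_linear (transpose :: real^'m^'n \<Rightarrow> real^'n^'m)"
  by (auto intro!: linearI simp: matrix_arith_simps linear_conv_bounded_linear[symmetric])

lemma bounded_linear_P_perp: "bounded_linear (P_perp (Y::real^'k^'n))"
  unfolding P_perp_def
  by (auto intro!: linearI simp: matrix_arith_simps linear_conv_bounded_linear[symmetric]
      algebra_simps)

lemma frob_inner_eq_inner: "frob_inner V W = inner V W"
  unfolding frob_inner_def trace_def matrix_matrix_mult_def transpose_def inner_vec_def
  by (subst sum.swap) (simp add: mult.commute)

lemma trace_transpose: "trace (transpose (A::real^'n^'n)) = trace A"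
  by (simp add: trace_def transpose_def)

lemma trace_skew_mult_symmetric:
  assumes "transpose (A::real^'n^'n) = - A" and "transpose S = S"
  shows "trace (A ** S) = 0"
proof -
  have "trace (A ** S) = trace (transpose (A ** S))"
    by (simp add: trace_transpose)
  also have "\<dots> = - trace (S ** A)"
    by (simp add: assms matrix_arith_simps trace_def sum_negf)
  also have "\<dots> = - trace (A ** S)"
    using trace_mul_sym[of S A] by simp
  finally show ?thesis by simp
qed

text \<open>The residual W = V - P_Y V is tangent, so it is orthogonal both to the normal
  vector V and to P_Y V = Y S/2 (a skew matrix W^T Y against a symmetric one S).\<close>

lemma P_perp_normal_space:
  assumes Y: "(Y::real^'k^'n) \<in> stiefel" and V: "V \<in> normal_space Y"
  shows "P_perp Y V = V"
proof -
  define S where "S = transpose Y ** V + transpose V ** Y"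
  define W where "W = V - P_perp Y V"
  have YY: "transpose Y ** Y = mat 1"
    using Y by (simp add: stiefel_def)
  have S_sym: "transpose S = S"
    by (simp add: S_def matrix_arith_simps)
  have P: "P_perp Y V = (1/2) *\<^sub>R (Y ** S)"
    by (simp add: P_perp_def S_def)
  have YW: "transpose Y ** W = transpose Y ** V - (1/2) *\<^sub>R S"
    by (simp add: W_def P matrix_arith_simps matrix_mul_assoc YY)
  have WY: "transpose W ** Y = transpose V ** Y - (1/2) *\<^sub>R S"
    by (simp add: W_def P matrix_arith_simps S_sym matrix_mul_assoc[symmetric] YY)
  have "transpose Y ** W + transpose W ** Y
      = (transpose Y ** V + transpose V ** Y) - ((1/2) *\<^sub>R S + (1/2) *\<^sub>R S)"
    unfolding YW WY by (simp add: algebra_simps)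
  also have "\<dots> = 0"
    by (simp add: S_def scaleR_left_distrib[symmetric])
  finally have W_tangent: "W \<in> tangent_space Y"
    by (simp add: tangent_space_def)
  have WY_skew: "transpose (transpose W ** Y) = - (transpose W ** Y)"
    using W_tangent by (simp add: tangent_space_def matrix_transpose_mul eq_neg_iff_add_eq_0)
  have "inner W V = 0"
    using V W_tangent by (simp add: normal_space_def frob_inner_eq_inner)
  moreover have "inner W (P_perp Y V) = (1/2) * trace ((transpose W ** Y) ** S)"
    by (simp add: frob_inner_eq_inner[symmetric] frob_inner_def P matrix_arith_simps
        matrix_mul_assoc trace_def scaleR_sum_right[symmetric] sum_distrib_left)
  moreover have "trace ((transpose W ** Y) ** S) = 0"
    using trace_skew_mult_symmetric[OF WY_skew S_sym] .
  ultimately have "inner W W = 0"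
    by (simp add: W_def inner_diff_right)
  then show ?thesis
    by (simp add: W_def)
qed

lemma P_perp_orthogonal_conj:
  assumes R: "orthogonal_matrix (R::real^'n^'n)" and T: "orthogonal_matrix (T::real^'k^'k)"
  shows "P_perp X (transpose R ** V ** T) = transpose R ** P_perp (R ** X ** transpose T) V ** T"
proof -
  have RR: "transpose R ** R = mat 1" and TT: "T ** transpose T = mat 1" "transpose T ** T = mat 1"
    using R T by (auto simp: orthogonal_matrix_def)
  show ?thesis
    by (simp add: P_perp_def matrix_arith_simps matrix_mul_assoc RR)
       (simp add: matrix_mul_assoc[symmetric] TT scaleR_right_distrib)
qed

lemma orthogonal_conj_eq_0_iff:
  assumes R: "orthogonal_matrix (R::real^'n^'n)" and T: "orthogonal_matrix (T::real^'k^'k)"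
  shows "transpose R ** A ** T = 0 \<longleftrightarrow> A = 0"
proof
  assume "transpose R ** A ** T = 0"
  then have "R ** (transpose R ** A ** T) ** transpose T = 0"
    by simp
  then show "A = 0"
    using R T by (simp add: orthogonal_matrix_def matrix_mul_assoc)
      (simp add: matrix_mul_assoc[symmetric])
qed simp

lemma has_vector_derivative_fixed_by_linear:
  fixes z :: "real \<Rightarrow> 'a::real_normed_vector"
  assumes "bounded_linear P" and "open S" and "t \<in> S" and "\<forall>s\<in>S. P (z s) = z s"
    and z: "(z has_vector_derivative z') (at t)"
  shows "P z' = z'"
proof -
  have "((\<lambda>s. P (z s)) has_vector_derivative P z') (at t)"
    using bounded_linear.has_vector_derivative[OF assms(1) z] .
  then have "(z has_vector_derivative P z') (at t)"
    by (rule has_vector_derivative_transform_within_open[OF _ assms(2,3)]) (use assms(4) in simp)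
  then show ?thesis
    using z vector_derivative_unique_at by blast
qed

lemma has_vector_derivative_conj:
  fixes R :: "real \<Rightarrow> real^'m^'n" and Z :: "real \<Rightarrow> real^'k^'n" and T :: "real \<Rightarrow> real^'p^'k"
  assumes "(R has_vector_derivative R') (at t)" and "(Z has_vector_derivative Z') (at t)"
    and "(T has_vector_derivative T') (at t)"
  shows "((\<lambda>s. transpose (R s) ** Z s ** T s) has_vector_derivative
      transpose (R t) ** Z t ** T' + (transpose (R t) ** Z' + transpose R' ** Z t) ** T t) (at t)"
  using bounded_bilinear.has_vector_derivative[OF bounded_bilinear_matrix_mult
      bounded_bilinear.has_vector_derivative[OF bounded_bilinear_matrix_mult
        bounded_linear.has_vector_derivative[OF bounded_linear_transpose assms(1)] assms(2)]
      assms(3)] .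

text \<open>Substitute R' = R xi1 and T' = T xi2 and use xi1^T = - xi1.\<close>

lemma conj_derivative_skew_eq:
  assumes R: "orthogonal_matrix (R::real^'n^'n)" and T: "orthogonal_matrix (T::real^'k^'k)"
    and skew1: "transpose (transpose R ** R') = - (transpose R ** R')"
    and skew2: "transpose (transpose T ** T') = - (transpose T ** T')"
  shows "transpose R ** Z ** T' + (transpose R ** Z' + transpose R' ** Z) ** T
    = transpose R ** Z' ** T - f_xi (transpose R ** R') (transpose T ** T') (transpose R ** Z ** T)"
proof -
  have "R' = R ** (transpose R ** R')" and T': "T' = T ** (transpose T ** T')"
    using R T by (simp_all add: matrix_mul_assoc orthogonal_matrix_def)
  then have "transpose R' = - (transpose R ** R') ** transpose R"
    by (metis matrix_transpose_mul skew1)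
  then show ?thesis
    by (subst T') (simp add: f_xi_def matrix_arith_simps matrix_mul_assoc)
qed

lemma skew_horizontal_lift:
  assumes "horizontal_lift I X \<beta> R \<theta>" and "t \<in> I"
  shows "transpose (transpose (R t) ** vector_derivative R (at t))
           = - (transpose (R t) ** vector_derivative R (at t))"
    and "transpose (transpose (\<theta> t) ** vector_derivative \<theta> (at t))
           = - (transpose (\<theta> t) ** vector_derivative \<theta> (at t))"
  using assms by (auto simp: horizontal_lift_def p_alg_def skew_def)

lemma conj_derivative_normal_iff:
  fixes R :: "real \<Rightarrow> real^'n^'n" and Z :: "real \<Rightarrow> real^'k^'n" and T :: "real \<Rightarrow> real^'k^'k"
  defines "z \<equiv> \<lambda>s. transpose (R s) ** Z s ** T s"
  assumes R: "orthogonal_matrix (R t)" and T: "orthogonal_matrix (T t)"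
    and skew1: "transpose (transpose (R t) ** R') = - (transpose (R t) ** R')"
    and skew2: "transpose (transpose (T t) ** T') = - (transpose (T t) ** T')"
    and hR: "(R has_vector_derivative R') (at t)" and hZ: "(Z has_vector_derivative Z') (at t)"
    and hT: "(T has_vector_derivative T') (at t)"
    and "open S" and "t \<in> S" and z_fixed: "\<forall>s\<in>S. P_perp X (z s) = z s"
  shows "P_perp (R t ** X ** transpose (T t)) Z' = 0 \<longleftrightarrow>
    (z has_vector_derivative
       - P_perp X (f_xi (transpose (R t) ** R') (transpose (T t) ** T') (z t))) (at t)"
proof -
  define f where "f = f_xi (transpose (R t) ** R') (transpose (T t) ** T') (z t)"
  define z' where "z' = transpose (R t) ** Z' ** T t - f"
  have hz: "(z has_vector_derivative z') (at t)"
    using has_vector_derivative_conj[OF hR hZ hT]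
    unfolding conj_derivative_skew_eq[OF R T skew1 skew2] z_def z'_def f_def .
  have "P_perp X z' = z'"
    using has_vector_derivative_fixed_by_linear[OF bounded_linear_P_perp assms(9,10) z_fixed hz] .
  moreover have "P_perp X z' = P_perp X (transpose (R t) ** Z' ** T t) - P_perp X f"
    unfolding z'_def by (rule linear_diff[OF bounded_linear.linear[OF bounded_linear_P_perp]])
  ultimately have "z' + P_perp X f = transpose (R t) ** P_perp (R t ** X ** transpose (T t)) Z' ** T t"
    by (simp add: P_perp_orthogonal_conj[OF R T] diff_eq_eq)
  then have "P_perp (R t ** X ** transpose (T t)) Z' = 0 \<longleftrightarrow> z' + P_perp X f = 0"
    using orthogonal_conj_eq_0_iff[OF R T] by simp
  also have "\<dots> \<longleftrightarrow> z' = - P_perp X f"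
    by (simp add: eq_neg_iff_add_eq_0)
  also have "\<dots> \<longleftrightarrow> (z has_vector_derivative - P_perp X f) (at t)"
    using hz vector_derivative_unique_at by blast
  finally show ?thesis
    unfolding f_def .
qed

theorem lemma5p9:
  fixes X :: "real^'k^'n" and I :: "real set"
    and \<beta> Z :: "real \<Rightarrow> real^'k^'n"
    and R :: "real \<Rightarrow> real^'n^'n" and \<theta> :: "real \<Rightarrow> real^'k^'k"
  assumes "X \<in> stiefel"
    and "is_interval I" and "open I"
    and "\<forall>t\<in>I. \<beta> t \<in> stiefel"
    and "\<forall>t\<in>I. Z differentiable (at t)"
    and "normal_field I \<beta> Z"
    and "horizontal_lift I X \<beta> R \<theta>"
  shows "normal_parallel I \<beta> Z \<longleftrightarrow>
    (\<forall>t\<in>I. ((\<lambda>s. transpose (R s) ** Z s ** \<theta> s) has_vector_derivative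
        - P_perp X (f_xi (transpose (R t) ** vector_derivative R (at t))
                         (transpose (\<theta> t) ** vector_derivative \<theta> (at t))
                         (transpose (R t) ** Z t ** \<theta> t))) (at t))"
proof -
  \<comment> \<open>The argument is pointwise on the open set I.\<close>
  define z where "z = (\<lambda>s. transpose (R s) ** Z s ** \<theta> s)"
  have lift: "orthogonal_matrix (R t)" "orthogonal_matrix (\<theta> t)"
      "R t ** X ** transpose (\<theta> t) = \<beta> t"
      "(R has_vector_derivative vector_derivative R (at t)) (at t)"
      "(\<theta> has_vector_derivative vector_derivative \<theta> (at t)) (at t)" if "t \<in> I" for t
    using assms(7) that by (auto simp: horizontal_lift_def vector_derivative_works[symmetric])
  have z_fixed: "\<forall>s\<in>I. P_perp X (z s) = z s"
    using assms(4,6) by (simp add: z_def P_perp_orthogonal_conj lift normal_field_def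
        P_perp_normal_space)
  have "P_perp (\<beta> t) (vector_derivative Z (at t)) = 0 \<longleftrightarrow>
      (z has_vector_derivative
        - P_perp X (f_xi (transpose (R t) ** vector_derivative R (at t))
                         (transpose (\<theta> t) ** vector_derivative \<theta> (at t)) (z t))) (at t)"
    if t: "t \<in> I" for t
  proof -
    have "(Z has_vector_derivative vector_derivative Z (at t)) (at t)"
      using assms(5) t vector_derivative_works by blast
    from conj_derivative_normal_iff[OF lift(1,2)[OF t] skew_horizontal_lift[OF assms(7) t]
        lift(4)[OF t] this lift(5)[OF t] assms(3) t z_fixed[unfolded z_def]]
    show ?thesis
      by (simp add: z_def lift(3)[OF t])
  qed
  then show ?thesis
    unfolding normal_parallel_def z_def by blast
qed

end
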